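(* In a $\$$-bounded contract, let $\mathcal{A}$ be an infinite cluster in $(s,\mathcal{P})$ such that $\mathrm{MEV}_{\mathcal{A}}(s,\mathcal{P})>0$. Then $\mathcal{A}$ is a MEV-attacker in $(s,\mathcal{P})$, i.e. an $f$-attacker for $f(\mathcal{B},s,\mathcal{P})=\mathrm{MEV}_{\mathcal{B}}(s,\mathcal{P})$.
   Context: Fix a countably infinite set $\mathbb{A}$ of actors, a set $\mathbb{T}$ of token types and a set $\mathbb{X}$ of transactions. A wallet is a function $\mathbb{T}\to\mathbb{N}$; $\mathbb{W}_{\mathrm{fin}}$ is the set of finite-support wallets. A wallet state is $W:\mathbb{A}\to(\mathbb{T}\to\mathbb{N})$ satisfying the finite tokens axiom $\sum_{\tau}\sum_{a}W(a)(\tau)\in\mathbb{N}$; wallet states are added pointwise, $W(\mathcal{A})=\sum_{a\in\mathcal{A}}W(a)$, and $\mathrm{own}(W)=\{a:\exists\tau.\,W(a)(\tau)>0\}$. A contract consists of blockchain states $\mathbb{S}=\mathbb{C}\times\mathbb{W}$ (contract state, wallet state), a partial transition function $\mapsto:(\mathbb{S}\times\mathbb{X})\rightharpoonup\mathbb{S}$ and initial states $\mathbb{S}_0$. A transaction $x$ is valid in $s$ if $s\xmapsto{x}s'$ for some $s'$. For finite sequences, $s\xrightarrow{\varepsilon}s$, and $s\xrightarrow{\vec{Y}x}s'$ iff either $s\xrightarrow{\vec{Y}}s''\xmapsto{x}s'$, or $s\xrightarrow{\vec{Y}}s'$ and $x$ is not valid in $s'$. $W(s)$ is the wallet state of $s$;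 $W_{\mathcal{A}}(s)=\sum_{a\in\mathcal{A}}W(s)(a)$. A wealth function is an additive map $\$:\mathbb{W}_{\mathrm{fin}}\to\mathbb{N}$; $\$_{\mathcal{A}}(s)=\$(W_{\mathcal{A}}(s))$; gain $G_{\mathcal{A}}(s,\vec{X})=\$_{\mathcal{A}}(s')-\$_{\mathcal{A}}(s)$ where $s\xrightarrow{\vec X}s'$. The contract is $\$$-bounded if for every $s_0\in\mathbb{S}_0$ there is $n$ such that $\$_{\mathbb{A}}(s)<n$ for all $s$ reachable from $s_0$. A transaction deducibility function $\kappa:\mathcal{P}(\mathbb{A})\times\mathcal{P}(\mathbb{X})\to\mathcal{P}(\mathbb{X})$, $(\mathcal{A},\mathcal{X})\mapsto\kappa_{\mathcal{A}}(\mathcal{X})$, satisfies: extensivity; idempotence; monotonicity in both arguments; continuity on increasing chains; finite causes (every finite $\mathcal{X}_0$ lies in $\kappa_{\mathcal{A}_0}(\emptyset)$ for a finite $\mathcal{A}_0$); private knowledge ($\kappa_{\mathcal{A}}(\emptyset)\subseteq\kappa_{\mathcal{A}'}(\emptyset)\Rightarrow\mathcal{A}\subseteq\mathcal{A}'$); no shared secrets ($\kappa_{\mathcal{A}}(\mathcal{X})\cap\kappa_{\mathcal{B}}(\mathcal{X})\subseteq\kappa_{\mathcal{A}\cap\mathcal{B}}(\mathcal{X})$). $\mathcal{X}^*$ denotes finite sequences over $\mathcal{X}$. $\mathrm{uG}_{\mathcal{A}}(s)=\max\{G_{\mathcal{A}}(s,\vec{Y}):\vec{Y}\in\kappa_{\mathcal{A}}(\emptyset)^*\}$;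 $\mathrm{xG}_{\mathcal{A}}(s,\vec{Y})=G_{\mathcal{A}}(s,\vec{Y})-\mathrm{uG}_{\mathcal{A}}(s)$; $\mathrm{MEV}_{\mathcal{A}}(s,\mathcal{P})=\max\{\mathrm{xG}_{\mathcal{A}}(s,\vec{Y}):\vec{Y}\in\kappa_{\mathcal{A}}(\mathcal{P})^*\}$. A renaming of $\mathcal{A}$ is a permutation $\rho:\mathcal{A}\to\mathcal{A}$ (identity outside $\mathcal{A}$ on sets of actors); $(W\rho)(a)=W(\rho^{-1}(a))$ for $a\in\mathcal{A}$, $W(a)$ otherwise; $(\sigma,W)\rho=(\sigma,W\rho)$. $\mathcal{A}$ is a cluster in $(s,\mathcal{P})$ iff for all renamings $\rho_0,\rho_1$ of $\mathcal{A}$, all $\mathcal{B}\subseteq\mathcal{A}$, $s'$, $\vec{X}$, $\mathcal{Y}\subseteq\mathcal{P}$: if $s\rho_0\xrightarrow{\vec{X}}s'$ with $\vec{X}\in\kappa_{\rho_0(\mathcal{B})}(\mathcal{Y})^*$, then there exist $\vec{X}',r'$ with $s\rho_1\xrightarrow{\vec{X}'}r'$, $\vec{X}'\in\kappa_{\rho_1(\mathcal{B})}(\mathcal{Y})^*$ and $W(r')=(W(s')\rho_0^{-1})\rho_1$. $W'$ is an $(\mathcal{A},\mathcal{B})$-wallet redistribution of $W$ iff there exist $W_{\mathcal{A}},W_{\mathcal{B}},W_{\mathcal{C}}$ with $W=W_{\mathcal{A}}+W_{\mathcal{C}}$, $\mathrm{own}(W_{\mathcal{A}})\subseteq\mathcal{A}$;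 $W'=W_{\mathcal{B}}+W_{\mathcal{C}}$, $\mathrm{own}(W_{\mathcal{B}})\subseteq\mathcal{B}$; $\mathrm{own}(W_{\mathcal{C}})\subseteq\mathbb{A}\setminus(\mathcal{A}\cup\mathcal{B})$; $W_{\mathcal{A}}(\mathbb{A})=W_{\mathcal{B}}(\mathbb{A})$; a state $s'$ is an $(\mathcal{A},\mathcal{B})$-wallet redistribution of $s$ iff this holds for their wallet states and they have the same contract state. For $f:\mathcal{P}(\mathbb{A})\times\mathbb{S}\times\mathcal{P}(\mathbb{X})\to\mathbb{Z}$, an infinite $\mathcal{A}$ is an $f$-attacker in $(s,\mathcal{P})$ if for every infinite $\mathcal{B}\subseteq\mathcal{A}$ there is an $(\mathcal{A},\mathcal{B})$-wallet redistribution $s'$ of $s$ with $f(\mathcal{B},s',\mathcal{P})>0$. *)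

theory Defs
  imports "HOL-Analysis.Analysis" "HOL-Library.Function_Algebras"
begin

(* Types: 'a actors, 't token types, 'x transactions, 'c contract states.
   A blockchain state is a pair (contract state, wallet state). *)

type_synonym ('a,'t) wstate = "'a \<Rightarrow> 't \<Rightarrow> nat"
type_synonym ('c,'a,'t) bstate = "'c \<times> ('a,'t) wstate"

(* finite tokens axiom: sum_tau sum_a W(a)(tau) is a natural number,
   i.e. only finitely many (a,tau) with nonzero amount *)
definition wstate_ok :: "('a,'t) wstate \<Rightarrow> bool" where
  "wstate_ok W \<longleftrightarrow> finite {(a,\<tau>). W a \<tau> \<noteq> 0}"

definition wallet_fin :: "('t \<Rightarrow> nat) \<Rightarrow> bool" where
  "wallet_fin w \<longleftrightarrow> finite {\<tau>. w \<tau> \<noteq> 0}"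

(* W(A) = sum_{a in A} W(a)  (only nonzero summands, which are finitely many
   for a wallet state satisfying the finite tokens axiom) *)
definition wsum :: "('a,'t) wstate \<Rightarrow> 'a set \<Rightarrow> ('t \<Rightarrow> nat)" where
  "wsum W A = (\<lambda>\<tau>. \<Sum>a | a \<in> A \<and> W a \<tau> \<noteq> 0. W a \<tau>)"

definition own :: "('a,'t) wstate \<Rightarrow> 'a set" where
  "own W = {a. \<exists>\<tau>. W a \<tau> > 0}"

definition contract_ok ::
  "(('c,'a,'t) bstate \<Rightarrow> 'x \<Rightarrow> ('c,'a,'t) bstate option) \<Rightarrow> ('c,'a,'t) bstate set \<Rightarrow> bool" where
  "contract_ok step S0 \<longleftrightarrow>
     (\<forall>s\<in>S0. wstate_ok (snd s)) \<and>
     (\<forall>s x s'. wstate_ok (snd s) \<longrightarrow> step s x = Some s' \<longrightarrow> wstate_ok (snd s'))"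

definition run ::
  "(('c,'a,'t) bstate \<Rightarrow> 'x \<Rightarrow> ('c,'a,'t) bstate option) \<Rightarrow> ('c,'a,'t) bstate \<Rightarrow> 'x list \<Rightarrow> ('c,'a,'t) bstate" where
  "run step s xs = foldl (\<lambda>r x. case step r x of None \<Rightarrow> r | Some r' \<Rightarrow> r') s xs"

definition reachable ::
  "(('c,'a,'t) bstate \<Rightarrow> 'x \<Rightarrow> ('c,'a,'t) bstate option) \<Rightarrow> ('c,'a,'t) bstate \<Rightarrow> ('c,'a,'t) bstate \<Rightarrow> bool" where
  "reachable step s0 s \<longleftrightarrow> (\<exists>xs. run step s0 xs = s)"

definition wealth_fn :: "(('t \<Rightarrow> nat) \<Rightarrow> nat) \<Rightarrow> bool" where
  "wealth_fn wl \<longleftrightarrow>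
     (\<forall>w1 w2. wallet_fin w1 \<longrightarrow> wallet_fin w2 \<longrightarrow> wl (w1 + w2) = wl w1 + wl w2)"

definition wealthA :: "(('t \<Rightarrow> nat) \<Rightarrow> nat) \<Rightarrow> 'a set \<Rightarrow> ('c,'a,'t) bstate \<Rightarrow> nat" where
  "wealthA wl A s = wl (wsum (snd s) A)"

definition dollar_bounded ::
  "(('c,'a,'t) bstate \<Rightarrow> 'x \<Rightarrow> ('c,'a,'t) bstate option) \<Rightarrow> ('c,'a,'t) bstate set
    \<Rightarrow> (('t \<Rightarrow> nat) \<Rightarrow> nat) \<Rightarrow> bool" where
  "dollar_bounded step S0 wl \<longleftrightarrow>
     (\<forall>s0\<in>S0. \<exists>n::nat. \<forall>s. reachable step s0 s \<longrightarrow> wealthA wl UNIV s < n)"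

definition gain ::
  "(('c,'a,'t) bstate \<Rightarrow> 'x \<Rightarrow> ('c,'a,'t) bstate option) \<Rightarrow> (('t \<Rightarrow> nat) \<Rightarrow> nat)
    \<Rightarrow> 'a set \<Rightarrow> ('c,'a,'t) bstate \<Rightarrow> 'x list \<Rightarrow> int" where
  "gain step wl A s xs = int (wealthA wl A (run step s xs)) - int (wealthA wl A s)"

definition deducibility :: "('a set \<Rightarrow> 'x set \<Rightarrow> 'x set) \<Rightarrow> bool" where
  "deducibility \<kappa> \<longleftrightarrow>
     (\<forall>A X. X \<subseteq> \<kappa> A X) \<and>
     (\<forall>A X. \<kappa> A (\<kappa> A X) = \<kappa> A X) \<and>
     (\<forall>A A' X X'. A \<subseteq> A' \<longrightarrow> X \<subseteq> X' \<longrightarrow> \<kappa> A X \<subseteq> \<kappa> A' X') \<and>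
     (\<forall>As Xs. incseq As \<longrightarrow> incseq Xs \<longrightarrow>
        \<kappa> (\<Union>i. As i) (\<Union>i. Xs i) = (\<Union>i. \<kappa> (As i) (Xs i))) \<and>
     (\<forall>X0. finite X0 \<longrightarrow> (\<exists>A0. finite A0 \<and> X0 \<subseteq> \<kappa> A0 {})) \<and>
     (\<forall>A A'. \<kappa> A {} \<subseteq> \<kappa> A' {} \<longrightarrow> A \<subseteq> A') \<and>
     (\<forall>A B X. \<kappa> A X \<inter> \<kappa> B X \<subseteq> \<kappa> (A \<inter> B) X)"

definition uG ::
  "(('c,'a,'t) bstate \<Rightarrow> 'x \<Rightarrow> ('c,'a,'t) bstate option) \<Rightarrow> (('t \<Rightarrow> nat) \<Rightarrow> nat)
    \<Rightarrow> ('a set \<Rightarrow> 'x set \<Rightarrow> 'x set) \<Rightarrow> 'a set \<Rightarrow> ('c,'a,'t) bstate \<Rightarrow> int" where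
  "uG step wl \<kappa> A s = Max {gain step wl A s ys | ys. set ys \<subseteq> \<kappa> A {}}"

definition xG ::
  "(('c,'a,'t) bstate \<Rightarrow> 'x \<Rightarrow> ('c,'a,'t) bstate option) \<Rightarrow> (('t \<Rightarrow> nat) \<Rightarrow> nat)
    \<Rightarrow> ('a set \<Rightarrow> 'x set \<Rightarrow> 'x set) \<Rightarrow> 'a set \<Rightarrow> ('c,'a,'t) bstate \<Rightarrow> 'x list \<Rightarrow> int" where
  "xG step wl \<kappa> A s ys = gain step wl A s ys - uG step wl \<kappa> A s"

definition MEV ::
  "(('c,'a,'t) bstate \<Rightarrow> 'x \<Rightarrow> ('c,'a,'t) bstate option) \<Rightarrow> (('t \<Rightarrow> nat) \<Rightarrow> nat)
    \<Rightarrow> ('a set \<Rightarrow> 'x set \<Rightarrow> 'x set) \<Rightarrow> 'a set \<Rightarrow> ('c,'a,'t) bstate \<Rightarrow> 'x set \<Rightarrow> int" where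
  "MEV step wl \<kappa> A s P = Max {xG step wl \<kappa> A s ys | ys. set ys \<subseteq> \<kappa> A P}"

definition renaming :: "'a set \<Rightarrow> ('a \<Rightarrow> 'a) \<Rightarrow> bool" where
  "renaming A \<rho> \<longleftrightarrow> bij \<rho> \<and> (\<forall>a. a \<notin> A \<longrightarrow> \<rho> a = a)"

definition wren :: "('a,'t) wstate \<Rightarrow> 'a set \<Rightarrow> ('a \<Rightarrow> 'a) \<Rightarrow> ('a,'t) wstate" where
  "wren W A \<rho> = (\<lambda>a. if a \<in> A then W (inv \<rho> a) else W a)"

definition sren :: "('c,'a,'t) bstate \<Rightarrow> 'a set \<Rightarrow> ('a \<Rightarrow> 'a) \<Rightarrow> ('c,'a,'t) bstate" where
  "sren s A \<rho> = (fst s, wren (snd s) A \<rho>)"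

definition cluster ::
  "(('c,'a,'t) bstate \<Rightarrow> 'x \<Rightarrow> ('c,'a,'t) bstate option) \<Rightarrow> ('a set \<Rightarrow> 'x set \<Rightarrow> 'x set)
    \<Rightarrow> 'a set \<Rightarrow> ('c,'a,'t) bstate \<Rightarrow> 'x set \<Rightarrow> bool" where
  "cluster step \<kappa> A s P \<longleftrightarrow>
     (\<forall>\<rho>0 \<rho>1 B s' X Y.
        renaming A \<rho>0 \<longrightarrow> renaming A \<rho>1 \<longrightarrow> B \<subseteq> A \<longrightarrow> Y \<subseteq> P \<longrightarrow>
        run step (sren s A \<rho>0) X = s' \<longrightarrow> set X \<subseteq> \<kappa> (\<rho>0 ` B) Y \<longrightarrow>
        (\<exists>X' r'. run step (sren s A \<rho>1) X' = r' \<and> set X' \<subseteq> \<kappa> (\<rho>1 ` B) Y \<and>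
                 snd r' = wren (wren (snd s') A (inv \<rho>0)) A \<rho>1))"

definition wredist :: "'a set \<Rightarrow> 'a set \<Rightarrow> ('a,'t) wstate \<Rightarrow> ('a,'t) wstate \<Rightarrow> bool" where
  "wredist A B W W' \<longleftrightarrow>
     (\<exists>WA WB WC. wstate_ok WA \<and> wstate_ok WB \<and> wstate_ok WC \<and>
        W = WA + WC \<and> own WA \<subseteq> A \<and>
        W' = WB + WC \<and> own WB \<subseteq> B \<and>
        own WC \<subseteq> UNIV - (A \<union> B) \<and>
        wsum WA UNIV = wsum WB UNIV)"

definition sredist :: "'a set \<Rightarrow> 'a set \<Rightarrow> ('c,'a,'t) bstate \<Rightarrow> ('c,'a,'t) bstate \<Rightarrow> bool" where
  "sredist A B s s' \<longleftrightarrow> fst s' = fst s \<and> wredist A B (snd s) (snd s')"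

definition attacker ::
  "('a set \<Rightarrow> ('c,'a,'t) bstate \<Rightarrow> 'x set \<Rightarrow> int) \<Rightarrow> 'a set \<Rightarrow> ('c,'a,'t) bstate \<Rightarrow> 'x set \<Rightarrow> bool" where
  "attacker f A s P \<longleftrightarrow> infinite A \<and>
     (\<forall>B. B \<subseteq> A \<longrightarrow> infinite B \<longrightarrow> (\<exists>s'. sredist A B s s' \<and> f B s' P > 0))"

end

theory Submission
  imports Defs
begin

text \<open>
  Fix a transaction sequence Y attaining MEV_A(s,P). By continuity of \<kappa> it is already
  deducible by a finite A0 \<subseteq> A, and only finitely many members of A hold tokens in s or after Y;
  let C be the union of these finite sets. Given an infinite B \<subseteq> A, an involution \<rho> of A
  moving C into B renames s into an (A,B)-wallet redistribution s' in which the members of B hold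
  everything that A held. The cluster property transports transaction sequences between s and s' in
  both directions: Y becomes a sequence deducible by B with the same gain for B, and every sequence
  deducible by B from s' is matched from s by one deducible by A with at least the same gain for A.
  Hence uG_B(s') \<le> uG_A(s) and MEV_B(s',P) \<ge> MEV_A(s,P) > 0. Since the contract is
  $-bounded, all sets of gains involved are finite, so these maxima exist.
\<close>

section \<open>Runs and wallet states\<close>

lemma run_append: "run step s (xs @ ys) = run step (run step s xs) ys"
  by (simp add: run_def)

lemma wstate_ok_run:
  assumes "contract_ok step S0" "wstate_ok (snd s)"
  shows "wstate_ok (snd (run step s xs))"
proof -
  have step_ok: "wstate_ok (snd r')" if "wstate_ok (snd r)" "step r x = Some r'" for r x r'
    using assms(1) that unfolding contract_ok_def by blast
  show ?thesis
    using assms(2)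
  proof (induction xs arbitrary: s)
    case Nil
    then show ?case by (simp add: run_def)
  next
    case (Cons x xs)
    then have "wstate_ok (snd (case step s x of None \<Rightarrow> s | Some r \<Rightarrow> r))"
      using step_ok by (auto split: option.split)
    then show ?case
      using Cons.IH by (simp add: run_def)
  qed
qed

lemma wstate_ok_reachable:
  assumes "contract_ok step S0" "s0 \<in> S0" "reachable step s0 s"
  shows "wstate_ok (snd s)"
proof -
  have "wstate_ok (snd s0)"
    using assms(1,2) unfolding contract_ok_def by blast
  moreover obtain xs where "run step s0 xs = s"
    using assms(3) unfolding reachable_def by blast
  ultimately show ?thesis
    using wstate_ok_run[OF assms(1)] by blast
qed

lemma finite_own: "wstate_ok W \<Longrightarrow> finite (own W)"
proof -
  assume "wstate_ok W"
  moreover have "own W \<subseteq> fst ` {(a, \<tau>). W a \<tau> \<noteq> 0}"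
    by (force simp: own_def)
  ultimately show ?thesis
    unfolding wstate_ok_def by (meson finite_imageI finite_subset)
qed

lemma finite_holders: "wstate_ok W \<Longrightarrow> finite {a. W a \<tau> \<noteq> 0}"
  using finite_own by (rule finite_subset[rotated]) (auto simp: own_def)

lemma wallet_fin_wsum: "wstate_ok W \<Longrightarrow> wallet_fin (wsum W C)"
proof -
  assume "wstate_ok W"
  moreover have "{\<tau>. wsum W C \<tau> \<noteq> 0} \<subseteq> snd ` {(a, \<tau>). W a \<tau> \<noteq> 0}"
  proof
    fix \<tau> assume "\<tau> \<in> {\<tau>. wsum W C \<tau> \<noteq> 0}"
    then obtain a where "W a \<tau> \<noteq> 0"
      unfolding wsum_def by (metis (mono_tags, lifting) mem_Collect_eq sum.neutral)
    then show "\<tau> \<in> snd ` {(a, \<tau>). W a \<tau> \<noteq> 0}"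
      by force
  qed
  ultimately show ?thesis
    unfolding wallet_fin_def wstate_ok_def by (meson finite_imageI finite_subset)
qed

lemma wstate_ok_comp:
  assumes "wstate_ok W" "inj \<rho>"
  shows "wstate_ok (W \<circ> \<rho>)"
proof -
  have "{(a, \<tau>). (W \<circ> \<rho>) a \<tau> \<noteq> 0} = map_prod \<rho> id -` {(a, \<tau>). W a \<tau> \<noteq> 0}"
    by auto
  moreover have "inj (map_prod \<rho> (id :: 't \<Rightarrow> 't))"
    using assms(2) by (simp add: prod.inj_map)
  ultimately show ?thesis
    using assms(1) unfolding wstate_ok_def by (metis finite_vimageI)
qed

lemma wsum_cong:
  assumes "\<And>a \<tau>. W a \<tau> \<noteq> 0 \<Longrightarrow> a \<in> C \<longleftrightarrow> a \<in> D"
  shows "wsum W C = wsum W D"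
proof -
  have "{a. a \<in> C \<and> W a \<tau> \<noteq> 0} = {a. a \<in> D \<and> W a \<tau> \<noteq> 0}" for \<tau>
    using assms by blast
  then show ?thesis
    unfolding wsum_def by simp
qed

lemma wsum_split:
  assumes "wstate_ok W" "C \<subseteq> D"
  shows "wsum W D = wsum W C + wsum W (D - C)"
proof
  fix \<tau>
  have "{a. a \<in> D \<and> W a \<tau> \<noteq> 0} = {a. a \<in> C \<and> W a \<tau> \<noteq> 0} \<union> {a. a \<in> D - C \<and> W a \<tau> \<noteq> 0}"
    using assms(2) by blast
  then show "wsum W D \<tau> = (wsum W C + wsum W (D - C)) \<tau>"
    unfolding wsum_def plus_fun_def
    by (simp, subst sum.union_disjoint)
       (auto intro: finite_subset[OF _ finite_holders[OF assms(1)]])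
qed

lemma wealth_wsum_mono:
  assumes "wealth_fn wl" "wstate_ok W" "C \<subseteq> D"
  shows "wl (wsum W C) \<le> wl (wsum W D)"
proof -
  have "wl (wsum W D) = wl (wsum W C) + wl (wsum W (D - C))"
    using assms wallet_fin_wsum wsum_split unfolding wealth_fn_def by metis
  then show ?thesis
    by simp
qed

lemma wsum_comp:
  assumes "inj \<rho>"
  shows "wsum (W \<circ> \<rho>) C = wsum W (\<rho> ` C)"
proof
  fix \<tau>
  have "{a. a \<in> \<rho> ` C \<and> W a \<tau> \<noteq> 0} = \<rho> ` {b. b \<in> C \<and> W (\<rho> b) \<tau> \<noteq> 0}"
    by auto
  then show "wsum (W \<circ> \<rho>) C \<tau> = wsum W (\<rho> ` C) \<tau>"
    unfolding wsum_def using assms by (simp add: sum.reindex inj_on_subset)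
qed

section \<open>Renaming by involutions\<close>

lemma exists_involution_into:
  assumes "finite F" "F \<subseteq> A" "B \<subseteq> A" "infinite B"
  obtains \<rho> where "\<And>x. \<rho> (\<rho> x) = x" "\<And>x. x \<notin> A \<Longrightarrow> \<rho> x = x" "\<rho> ` F \<subseteq> B"
proof -
  define D where "D = F - B"
  have "finite D"
    using assms(1) by (simp add: D_def)
  moreover have "infinite (B - F)"
    using assms(1,4) by (simp add: Diff_infinite_finite)
  ultimately obtain E where E: "E \<subseteq> B - F" "finite E" "card E = card D"
    by (meson infinite_arbitrarily_large)
  with \<open>finite D\<close> obtain g where g: "bij_betw g D E"
    by (metis finite_same_card_bij)
  have DE: "D \<inter> E = {}"
    using E(1) by (auto simp: D_def)
  define \<rho> where "\<rho> x = (if x \<in> D then g x else if x \<in> E then inv_into D g x else x)" for x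
  show thesis
  proof
    show "\<rho> (\<rho> x) = x" for x
      using g DE bij_betw_apply[OF g] bij_betw_apply[OF bij_betw_inv_into[OF g]]
      by (auto simp: \<rho>_def bij_betw_def f_inv_into_f)
    show "\<rho> x = x" if "x \<notin> A" for x
      using that E(1) assms(2,3) by (auto simp: \<rho>_def D_def)
    show "\<rho> ` F \<subseteq> B"
      using E(1) bij_betw_apply[OF g] by (auto simp: \<rho>_def D_def)
  qed
qed

lemma involution_inv: "(\<And>x. \<rho> (\<rho> x) = x) \<Longrightarrow> inv \<rho> = \<rho>"
  by (rule inv_equality)

lemma involution_maps_into:
  assumes "\<And>x. \<rho> (\<rho> x) = x" "\<And>x. x \<notin> A \<Longrightarrow> \<rho> x = x" "a \<in> A"
  shows "\<rho> a \<in> A"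
  by (metis assms)

lemma wsum_comp_involution:
  assumes "\<And>x. \<rho> (\<rho> x) = x" "\<And>x. x \<notin> A \<Longrightarrow> \<rho> x = x" "B \<subseteq> A" "\<rho> ` (A \<inter> own W) \<subseteq> B"
  shows "wsum (W \<circ> \<rho>) B = wsum W A"
proof -
  have "wsum (W \<circ> \<rho>) B = wsum W (\<rho> ` B)"
    using involuntory_imp_bij[OF assms(1)] by (simp add: wsum_comp bij_is_inj)
  also have "\<dots> = wsum W A"
  proof (rule wsum_cong)
    fix a \<tau> assume "W a \<tau> \<noteq> 0"
    show "a \<in> \<rho> ` B \<longleftrightarrow> a \<in> A"
    proof
      show "a \<in> \<rho> ` B \<Longrightarrow> a \<in> A"
        using assms(3) involution_maps_into[OF assms(1,2)] by blast
      assume "a \<in> A"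
      with \<open>W a \<tau> \<noteq> 0\<close> have "\<rho> a \<in> B"
        using assms(4) by (auto simp: own_def)
      then show "a \<in> \<rho> ` B"
        using assms(1)[of a] by (auto intro: image_eqI[of _ _ "\<rho> a"])
    qed
  qed
  finally show ?thesis .
qed

lemma wealth_comp_involution_le:
  assumes "wealth_fn wl" "wstate_ok (W \<circ> \<rho>)"
    and "\<And>x. \<rho> (\<rho> x) = x" "\<And>x. x \<notin> A \<Longrightarrow> \<rho> x = x" "B \<subseteq> A"
  shows "wl (wsum W B) \<le> wl (wsum (W \<circ> \<rho>) A)"
proof -
  have "wsum W B = wsum ((W \<circ> \<rho>) \<circ> \<rho>) B"
    using assms(3) by (simp add: comp_def)
  also have "\<dots> = wsum (W \<circ> \<rho>) (\<rho> ` B)"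
    using involuntory_imp_bij[OF assms(3)] by (simp add: wsum_comp bij_is_inj)
  finally have "wsum W B = wsum (W \<circ> \<rho>) (\<rho> ` B)" .
  moreover have "\<rho> ` B \<subseteq> A"
    using assms(5) involution_maps_into[OF assms(3,4)] by blast
  ultimately show ?thesis
    using wealth_wsum_mono[OF assms(1,2)] by simp
qed

lemma wren_involution:
  assumes "\<And>x. \<rho> (\<rho> x) = x" "\<And>x. x \<notin> A \<Longrightarrow> \<rho> x = x"
  shows "wren W A \<rho> = W \<circ> \<rho>"
  using assms by (auto simp: wren_def involution_inv)

lemma wren_id: "wren W A id = W"
  unfolding wren_def by (rule ext) simp

lemma sren_id: "sren s A id = s"
  by (simp add: sren_def wren_id)

lemma sren_involution:
  assumes "\<And>x. \<rho> (\<rho> x) = x" "\<And>x. x \<notin> A \<Longrightarrow> \<rho> x = x"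
  shows "sren s A \<rho> = (fst s, snd s \<circ> \<rho>)"
  using assms by (simp add: sren_def wren_involution)

lemma wealth_sren_involution:
  assumes "\<And>x. \<rho> (\<rho> x) = x" "\<And>x. x \<notin> A \<Longrightarrow> \<rho> x = x"
    and "B \<subseteq> A" "\<rho> ` (A \<inter> own (snd s)) \<subseteq> B"
  shows "wealthA wl B (sren s A \<rho>) = wealthA wl A s"
  using wsum_comp_involution[OF assms] by (simp add: wealthA_def sren_involution[OF assms(1,2)])

lemma sredist_involution:
  fixes s :: "('c,'a,'t) bstate"
  assumes "wstate_ok (snd s)" "\<And>x. \<rho> (\<rho> x) = x" "\<And>x. x \<notin> A \<Longrightarrow> \<rho> x = x"
    and "B \<subseteq> A" "\<rho> ` (A \<inter> own (snd s)) \<subseteq> B"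
  shows "sredist A B s (sren s A \<rho>)"
proof -
  define WA :: "('a,'t) wstate" where "WA a = (if a \<in> A then snd s a else (\<lambda>_. 0))" for a
  define WC :: "('a,'t) wstate" where "WC a = (if a \<in> A then (\<lambda>_. 0) else snd s a)" for a
  define WB where "WB = WA \<circ> \<rho>"
  have inj: "inj \<rho>"
    using involuntory_imp_bij[OF assms(2)] by (rule bij_is_inj)
  have "wstate_ok WA" "wstate_ok WC"
    using assms(1) unfolding wstate_ok_def WA_def WC_def
    by (auto elim!: finite_subset[rotated] split: if_splits)
  moreover have "wstate_ok WB"
    unfolding WB_def using \<open>wstate_ok WA\<close> inj by (rule wstate_ok_comp)
  moreover have "snd s = WA + WC"
    by (auto simp: WA_def WC_def fun_eq_iff)
  moreover have "snd (sren s A \<rho>) = WB + WC"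
    using involution_maps_into[OF assms(2,3)] assms(3)
    by (auto simp: sren_involution[OF assms(2,3)] WB_def WA_def WC_def fun_eq_iff)
  moreover have "own WA \<subseteq> A"
    by (auto simp: own_def WA_def)
  moreover have "own WB \<subseteq> B"
  proof
    fix a assume "a \<in> own WB"
    then have "\<rho> a \<in> A \<inter> own (snd s)"
      by (auto simp: own_def WB_def WA_def split: if_splits)
    then show "a \<in> B"
      using assms(2,5) by (metis image_eqI subsetD)
  qed
  moreover have "own WC \<subseteq> UNIV - (A \<union> B)"
    using assms(4) by (auto simp: own_def WC_def)
  moreover have "wsum WA UNIV = wsum WB UNIV"
    unfolding WB_def wsum_comp[OF inj] using involuntory_imp_bij[OF assms(2)]
    by (simp add: bij_is_surj)
  ultimately show ?thesis
    unfolding sredist_def wredist_def by (auto simp: sren_def)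
qed

lemma cluster_unrename:
  assumes "cluster step \<kappa> A s P" "\<And>x. \<rho> (\<rho> x) = x" "\<And>x. x \<notin> A \<Longrightarrow> \<rho> x = x"
    and "C \<subseteq> A" "Y \<subseteq> P" "set Z \<subseteq> \<kappa> (\<rho> ` C) Y"
  shows "\<exists>X. set X \<subseteq> \<kappa> C Y \<and> snd (run step s X) = snd (run step (sren s A \<rho>) Z) \<circ> \<rho>"
  using assms(1)[unfolded cluster_def, rule_format, of \<rho> id C Y Z "run step (sren s A \<rho>) Z"] assms(2-6)
  by (simp add: renaming_def involuntory_imp_bij sren_id wren_id wren_involution involution_inv)

lemma cluster_rename:
  assumes "cluster step \<kappa> A s P" "\<And>x. \<rho> (\<rho> x) = x" "\<And>x. x \<notin> A \<Longrightarrow> \<rho> x = x"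
    and "C \<subseteq> A" "Y \<subseteq> P" "set X \<subseteq> \<kappa> C Y"
  shows "\<exists>Z. set Z \<subseteq> \<kappa> (\<rho> ` C) Y \<and> snd (run step (sren s A \<rho>) Z) = snd (run step s X) \<circ> \<rho>"
  using assms(1)[unfolded cluster_def, rule_format, of id \<rho> C Y X "run step s X"] assms(2-6)
  by (simp add: renaming_def involuntory_imp_bij sren_id wren_id wren_involution)

section \<open>Transaction deducibility\<close>

lemma deducibility_mono:
  assumes "deducibility \<kappa>" "A \<subseteq> A'" "X \<subseteq> X'"
  shows "\<kappa> A X \<subseteq> \<kappa> A' X'"
  using assms(1)[unfolded deducibility_def, THEN conjunct2, THEN conjunct2, THEN conjunct1] assms(2,3)
  by blast

lemma deducibility_continuous:
  assumes "deducibility \<kappa>" "incseq As" "incseq Xs"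
  shows "\<kappa> (\<Union>i. As i) (\<Union>i. Xs i) = (\<Union>i. \<kappa> (As i) (Xs i))"
  using assms(1)[unfolded deducibility_def, THEN conjunct2, THEN conjunct2, THEN conjunct2, THEN conjunct1]
    assms(2,3)
  by blast

lemma deducibility_finite_actors:
  assumes "deducibility \<kappa>" "countable A" "finite F" "F \<subseteq> \<kappa> A X"
  obtains A0 where "finite A0" "A0 \<subseteq> A" "F \<subseteq> \<kappa> A0 X"
proof (cases "A = {}")
  case True
  then show thesis
    using assms(4) that by blast
next
  case False
  define As where "As i = from_nat_into A ` {..i}" for i :: nat
  have "incseq As"
    unfolding incseq_def As_def by (auto intro: image_mono)
  moreover have "(\<Union>i. As i) = A"
    using False assms(2) unfolding As_def by (auto intro: from_nat_into dest: from_nat_into_surj)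
  ultimately have "\<kappa> A X = (\<Union>i. \<kappa> (As i) X)"
    using deducibility_continuous[OF assms(1) \<open>incseq As\<close> incseq_const, of X] by simp
  with assms(4) have cover: "F \<subseteq> \<Union> (range (\<lambda>i. \<kappa> (As i) X))"
    by simp
  have "\<kappa> (As i) X \<subseteq> \<kappa> (As j) X" if "i \<le> j" for i j
    using \<open>incseq As\<close> that deducibility_mono[OF assms(1)] by (simp add: incseq_def)
  then have chain: "subset.chain UNIV (range (\<lambda>i. \<kappa> (As i) X))"
    unfolding subset.chain_def by (auto intro: nat_le_linear[THEN disjE])
  obtain K where "K \<in> range (\<lambda>i. \<kappa> (As i) X)" "F \<subseteq> K"
    by (rule finite_subset_Union_chain[OF assms(3) cover _ chain]) auto
  then obtain i where "F \<subseteq> \<kappa> (As i) X"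
    by blast
  moreover have "finite (As i)" "As i \<subseteq> A"
    using False unfolding As_def by (auto intro: from_nat_into)
  ultimately show thesis
    using that by blast
qed

section \<open>Gains and MEV\<close>

definition gains ::
  "(('c,'a,'t) bstate \<Rightarrow> 'x \<Rightarrow> ('c,'a,'t) bstate option) \<Rightarrow> (('t \<Rightarrow> nat) \<Rightarrow> nat)
    \<Rightarrow> 'a set \<Rightarrow> ('c,'a,'t) bstate \<Rightarrow> 'x set \<Rightarrow> int set" where
  "gains step wl A s X = {gain step wl A s ys | ys. set ys \<subseteq> X}"

lemma gains_nonempty: "gains step wl A s X \<noteq> {}"
proof -
  have "gain step wl A s [] \<in> gains step wl A s X"
    unfolding gains_def mem_Collect_eq by (intro exI[of _ "[]"]) simp
  then show ?thesis
    by blast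
qed

lemma uG_eq_Max_gains: "uG step wl \<kappa> A s = Max (gains step wl A s (\<kappa> A {}))"
  by (simp add: uG_def gains_def)

lemma MEV_eq_Max_gains:
  assumes "finite (gains step wl A s (\<kappa> A P))"
  shows "MEV step wl \<kappa> A s P = Max (gains step wl A s (\<kappa> A P)) - uG step wl \<kappa> A s"
proof -
  have "{xG step wl \<kappa> A s ys | ys. set ys \<subseteq> \<kappa> A P}
      = (\<lambda>g. g - uG step wl \<kappa> A s) ` gains step wl A s (\<kappa> A P)"
    by (auto simp: xG_def gains_def)
  then show ?thesis
    unfolding MEV_def using mono_Max_commute[of "\<lambda>g. g - uG step wl \<kappa> A s", OF _ assms gains_nonempty]
    by (simp add: mono_def)
qed

lemma gains_Max_attained:
  assumes "finite (gains step wl A s X)"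
  obtains Y where "set Y \<subseteq> X" "gain step wl A s Y = Max (gains step wl A s X)"
proof -
  have "Max (gains step wl A s X) \<in> gains step wl A s X"
    using Max_in[OF assms gains_nonempty] .
  then show thesis
    using that by (auto simp: gains_def)
qed

lemma wealth_bounded_after_reachable:
  assumes "contract_ok step S0" "wealth_fn wl" "dollar_bounded step S0 wl"
    and "s0 \<in> S0" "reachable step s0 s"
  obtains n where "\<And>xs C. wealthA wl C (run step s xs) < n"
proof -
  obtain n where n: "\<And>r. reachable step s0 r \<Longrightarrow> wealthA wl UNIV r < n"
    using assms(3,4) unfolding dollar_bounded_def by blast
  obtain ys where ys: "run step s0 ys = s"
    using assms(5) unfolding reachable_def by blast
  have "wealthA wl C (run step s xs) < n" for xs C
  proof -
    have "wstate_ok (snd (run step s xs))"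
      using wstate_ok_run[OF assms(1) wstate_ok_reachable[OF assms(1,4,5)]] .
    then have "wealthA wl C (run step s xs) \<le> wealthA wl UNIV (run step s xs)"
      unfolding wealthA_def using assms(2) wealth_wsum_mono by blast
    also have "\<dots> < n"
      using n unfolding reachable_def by (metis run_append ys)
    finally show ?thesis .
  qed
  then show thesis
    using that by blast
qed

lemma finite_gains:
  assumes "\<And>xs. wealthA wl A (run step s xs) < n"
  shows "finite (gains step wl A s X)"
proof (rule finite_subset)
  show "gains step wl A s X \<subseteq> {- int (wealthA wl A s) .. int n}"
  proof
    fix g assume "g \<in> gains step wl A s X"
    then obtain ys where "g = gain step wl A s ys"
      by (auto simp: gains_def)
    then show "g \<in> {- int (wealthA wl A s) .. int n}"
      using assms[of ys] by (simp add: gain_def)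
  qed
qed simp

lemma Max_le_Max_if_dominated:
  fixes G H :: "int set"
  assumes "finite H" "\<And>g. g \<in> G \<Longrightarrow> L \<le> g" "\<And>g. g \<in> G \<Longrightarrow> \<exists>h\<in>H. g \<le> h"
  shows "finite G" and "G \<noteq> {} \<Longrightarrow> Max G \<le> Max H"
proof -
  have "G \<subseteq> {L .. Max H}"
    using assms by (force intro: order_trans[OF _ Max_ge])
  then show "finite G"
    by (rule finite_subset) simp
  then show "G \<noteq> {} \<Longrightarrow> Max G \<le> Max H"
    using \<open>G \<subseteq> {L .. Max H}\<close> by (simp add: subset_iff)
qed

lemma MEV_le_MEV_if_dominated:
  assumes fin_unaided: "finite (gains step wl A s (\<kappa> A {}))"
    and fin: "finite (gains step wl A s (\<kappa> A P))"
    and dom_unaided: "\<And>g. g \<in> gains step wl B s' (\<kappa> B {}) \<Longrightarrow> \<exists>h \<in> gains step wl A s (\<kappa> A {}). g \<le> h"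
    and dom: "\<And>g. g \<in> gains step wl B s' (\<kappa> B P) \<Longrightarrow> \<exists>h \<in> gains step wl A s (\<kappa> A P). g \<le> h"
    and witness: "Max (gains step wl A s (\<kappa> A P)) \<in> gains step wl B s' (\<kappa> B P)"
  shows "MEV step wl \<kappa> A s P \<le> MEV step wl \<kappa> B s' P"
proof -
  have lower: "- int (wealthA wl B s') \<le> g" if "g \<in> gains step wl B s' X" for g X
    using that by (auto simp: gains_def gain_def)
  have "uG step wl \<kappa> B s' \<le> uG step wl \<kappa> A s"
    unfolding uG_eq_Max_gains
    using Max_le_Max_if_dominated(2)[OF fin_unaided lower[of _ "\<kappa> B {}"] dom_unaided gains_nonempty] .
  moreover have fin': "finite (gains step wl B s' (\<kappa> B P))"
    using Max_le_Max_if_dominated(1)[OF fin lower[of _ "\<kappa> B P"] dom] .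
  moreover have "Max (gains step wl A s (\<kappa> A P)) \<le> Max (gains step wl B s' (\<kappa> B P))"
    using fin' witness by simp
  ultimately show ?thesis
    using MEV_eq_Max_gains[of step wl A s \<kappa> P, OF fin] MEV_eq_Max_gains[of step wl B s' \<kappa> P, OF fin']
    by linarith
qed

section \<open>MEV after renaming into a subset\<close>

lemma gains_renamed_dominated:
  assumes "contract_ok step S0" "wstate_ok (snd s)" "wealth_fn wl" "deducibility \<kappa>"
    and "cluster step \<kappa> A s P" "\<And>x. \<rho> (\<rho> x) = x" "\<And>x. x \<notin> A \<Longrightarrow> \<rho> x = x"
    and "B \<subseteq> A" "Y \<subseteq> P" "wealthA wl B (sren s A \<rho>) = wealthA wl A s"
    and "g \<in> gains step wl B (sren s A \<rho>) (\<kappa> B Y)"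
  shows "\<exists>h \<in> gains step wl A s (\<kappa> A Y). g \<le> h"
proof -
  obtain Z where Z: "set Z \<subseteq> \<kappa> B Y" "g = gain step wl B (sren s A \<rho>) Z"
    using assms(11) by (auto simp: gains_def)
  have \<rho>B: "\<rho> ` B \<subseteq> A"
    using assms(8) involution_maps_into[OF assms(6,7)] by blast
  have "\<rho> ` \<rho> ` B = B"
    using assms(6) by (force simp: image_comp)
  with Z(1) obtain X where X: "set X \<subseteq> \<kappa> (\<rho> ` B) Y"
    "snd (run step s X) = snd (run step (sren s A \<rho>) Z) \<circ> \<rho>"
    using cluster_unrename[OF assms(5-7) \<rho>B assms(9)] by metis
  have "wstate_ok (snd (run step s X))"
    using wstate_ok_run[OF assms(1,2)] .
  then have "wealthA wl B (run step (sren s A \<rho>) Z) \<le> wealthA wl A (run step s X)"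
    unfolding wealthA_def X(2) using wealth_comp_involution_le[OF assms(3) _ assms(6,7,8)] by simp
  then have "g \<le> gain step wl A s X"
    using Z(2) assms(10) by (simp add: gain_def)
  moreover have "set X \<subseteq> \<kappa> A Y"
    using X(1) deducibility_mono[OF assms(4) \<rho>B order_refl] by blast
  ultimately show ?thesis
    by (auto simp: gains_def)
qed

lemma gain_in_renamed_gains:
  assumes "deducibility \<kappa>" "cluster step \<kappa> A s P"
    and "\<And>x. \<rho> (\<rho> x) = x" "\<And>x. x \<notin> A \<Longrightarrow> \<rho> x = x"
    and "B \<subseteq> A" "C \<subseteq> A" "\<rho> ` C \<subseteq> B" "set Y \<subseteq> \<kappa> C P"
    and "\<rho> ` (A \<inter> own (snd (run step s Y))) \<subseteq> B"
    and "wealthA wl B (sren s A \<rho>) = wealthA wl A s"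
  shows "gain step wl A s Y \<in> gains step wl B (sren s A \<rho>) (\<kappa> B P)"
proof -
  obtain Z where Z: "set Z \<subseteq> \<kappa> (\<rho> ` C) P"
    "snd (run step (sren s A \<rho>) Z) = snd (run step s Y) \<circ> \<rho>"
    using cluster_rename[OF assms(2-4,6) order_refl assms(8)] by blast
  have "wealthA wl B (run step (sren s A \<rho>) Z) = wealthA wl A (run step s Y)"
    unfolding wealthA_def Z(2) using wsum_comp_involution[OF assms(3,4,5,9)] by simp
  then have "gain step wl B (sren s A \<rho>) Z = gain step wl A s Y"
    using assms(10) by (simp add: gain_def)
  moreover have "set Z \<subseteq> \<kappa> B P"
    using Z(1) deducibility_mono[OF assms(1) assms(7) order_refl] by blast
  ultimately show ?thesis
    by (force simp: gains_def)
qed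

lemma exists_redistribution_MEV_ge:
  assumes "contract_ok step S0" "wstate_ok (snd s)" "wealth_fn wl" "deducibility \<kappa>"
    and "cluster step \<kappa> A s P" "\<And>X. finite (gains step wl A s X)"
    and "finite C" "C \<subseteq> A" "set Y \<subseteq> \<kappa> C P"
    and "gain step wl A s Y = Max (gains step wl A s (\<kappa> A P))"
    and "A \<inter> own (snd s) \<subseteq> C" "A \<inter> own (snd (run step s Y)) \<subseteq> C"
    and "B \<subseteq> A" "infinite B"
  shows "\<exists>s'. sredist A B s s' \<and> MEV step wl \<kappa> A s P \<le> MEV step wl \<kappa> B s' P"
proof -
  obtain \<rho> where \<rho>: "\<And>x. \<rho> (\<rho> x) = x" "\<And>x. x \<notin> A \<Longrightarrow> \<rho> x = x" "\<rho> ` C \<subseteq> B"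
    using exists_involution_into[OF assms(7,8,13,14)] by blast
  then have held: "\<rho> ` (A \<inter> own (snd s)) \<subseteq> B" "\<rho> ` (A \<inter> own (snd (run step s Y))) \<subseteq> B"
    using assms(11,12) by blast+
  have wealth: "wealthA wl B (sren s A \<rho>) = wealthA wl A s"
    using wealth_sren_involution[OF \<rho>(1,2) assms(13) held(1)] .
  have "MEV step wl \<kappa> A s P \<le> MEV step wl \<kappa> B (sren s A \<rho>) P"
  proof (rule MEV_le_MEV_if_dominated[OF assms(6,6)])
    show "\<exists>h \<in> gains step wl A s (\<kappa> A {}). g \<le> h"
      if "g \<in> gains step wl B (sren s A \<rho>) (\<kappa> B {})" for g
      using gains_renamed_dominated[OF assms(1-5) \<rho>(1,2) assms(13) empty_subsetI wealth that] .
    show "\<exists>h \<in> gains step wl A s (\<kappa> A P). g \<le> h"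
      if "g \<in> gains step wl B (sren s A \<rho>) (\<kappa> B P)" for g
      using gains_renamed_dominated[OF assms(1-5) \<rho>(1,2) assms(13) order_refl wealth that] .
    show "Max (gains step wl A s (\<kappa> A P)) \<in> gains step wl B (sren s A \<rho>) (\<kappa> B P)"
      using gain_in_renamed_gains[OF assms(4,5) \<rho>(1,2) assms(13,8) \<rho>(3) assms(9) held(2) wealth]
        assms(10) by simp
  qed
  then show ?thesis
    using sredist_involution[OF assms(2) \<rho>(1,2) assms(13) held(1)] by blast
qed

theorem mainTheorem20:
  fixes step :: "('c, 'a, 't) bstate \<Rightarrow> 'x \<Rightarrow> ('c, 'a, 't) bstate option"
    and S0 :: "('c, 'a, 't) bstate set"
    and wl :: "('t \<Rightarrow> nat) \<Rightarrow> nat"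
    and \<kappa> :: "'a set \<Rightarrow> 'x set \<Rightarrow> 'x set"
    and A :: "'a set" and s :: "('c, 'a, 't) bstate" and P :: "'x set"
  assumes actors: "countable (UNIV :: 'a set)" "infinite (UNIV :: 'a set)"
    and contract: "contract_ok step S0"
    and wealth: "wealth_fn wl"
    and kappa: "deducibility \<kappa>"
    and bnd: "dollar_bounded step S0 wl"
    and reach: "\<exists>s0\<in>S0. reachable step s0 s"
    and inf: "infinite A"
    and clu: "cluster step \<kappa> A s P"
    and mev: "MEV step wl \<kappa> A s P > 0"
  shows "attacker (\<lambda>B s' P'. MEV step wl \<kappa> B s' P') A s P"
proof -
  obtain s0 where s0: "s0 \<in> S0" "reachable step s0 s"
    using reach by blast
  have ok: "wstate_ok (snd s)"
    using wstate_ok_reachable[OF contract s0] .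
  obtain n where "\<And>xs C. wealthA wl C (run step s xs) < n"
    using wealth_bounded_after_reachable[OF contract wealth bnd s0] by blast
  then have fin: "\<And>X. finite (gains step wl A s X)"
    by (rule finite_gains)
  obtain Y where Y: "set Y \<subseteq> \<kappa> A P" "gain step wl A s Y = Max (gains step wl A s (\<kappa> A P))"
    using gains_Max_attained[OF fin] .
  obtain A0 where A0: "finite A0" "A0 \<subseteq> A" "set Y \<subseteq> \<kappa> A0 P"
    using deducibility_finite_actors[OF kappa countable_subset[OF subset_UNIV actors(1)] _ Y(1)] by blast
  define C where "C = A0 \<union> (A \<inter> own (snd s)) \<union> (A \<inter> own (snd (run step s Y)))"
  have C: "finite C" "C \<subseteq> A" "set Y \<subseteq> \<kappa> C P"
    "A \<inter> own (snd s) \<subseteq> C" "A \<inter> own (snd (run step s Y)) \<subseteq> C"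
    using A0 finite_own[OF ok] finite_own[OF wstate_ok_run[OF contract ok]]
      deducibility_mono[OF kappa, of A0 C P P] by (auto simp: C_def)
  note redistribution = exists_redistribution_MEV_ge[OF contract ok wealth kappa clu fin C(1-3) Y(2) C(4,5)]
  show ?thesis
    unfolding attacker_def
  proof (intro conjI allI impI)
    fix B assume "B \<subseteq> A" "infinite B"
    then obtain s' where "sredist A B s s'" "MEV step wl \<kappa> A s P \<le> MEV step wl \<kappa> B s' P"
      using redistribution by blast
    then show "\<exists>s'. sredist A B s s' \<and> 0 < MEV step wl \<kappa> B s' P"
      using mev by (intro exI[of _ s']) simp
  qed (rule inf)
qed

end
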